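(* Let $k$ be such that $n = k\,2^{(k+9)/2}$ is an integer divisible by $k$. Then, for $k$ sufficiently large, $$T(\mathcal{F}_2^4) < k^3 f(n,k),$$ where $f(n,k) = \binom{k}{3}\left(\frac{n}{k}\right)^{4k-9}2^{-4\binom{k}{2}+9}$.
   Context: Partition the vertex set of $K_n$ into $k$ classes $V_1,\dots,V_k$, each of size $n/k$. Let $X=\{\{v_i,v_j\}: v_i\in V_i,\ v_j\in V_j,\ i\ne j\}$. Let $\mathcal{F}=\{\binom{S}{2}: S\subseteq V_1\cup\dots\cup V_k,\ |S\cap V_i|=1 \text{ for all } i\}$ be the family of edge sets of transversal $k$-cliques. For a family $\mathcal{H}$ of finite sets, $T(\mathcal{H}) = \sum_{H\in\mathcal{H}}2^{-|H|}$. The family of $4$-clusters is $$\mathcal{F}_2^4=\left\{E_1\cup E_2\cup E_3\cup E_4 : \{E_1,\dots,E_4\}\in\binom{\mathcal{F}}{4},\ |E_1\cap E_2\cap E_3\cap E_4|\ge 2\right\},$$ i.e. the set of all unions of $4$ distinct members of $\mathcal{F}$ that share at least two elements of $X$. *)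

theory Defs
  imports Complex_Main
begin

text \<open>Vertex set of K_n partitioned into k classes V_0,...,V_(k-1) of size m = n/k;
  vertex (i,a) is the a-th vertex of class V_i.\<close>

definition vclass :: "nat \<Rightarrow> nat \<Rightarrow> nat \<Rightarrow> (nat \<times> nat) set" where
  "vclass k m i = {i} \<times> {0..<m}"

definition verts :: "nat \<Rightarrow> nat \<Rightarrow> (nat \<times> nat) set" where
  "verts k m = (\<Union>i<k. vclass k m i)"

definition crossEdges :: "nat \<Rightarrow> nat \<Rightarrow> (nat \<times> nat) set set" where
  "crossEdges k m = {{u, v} | u v i j. i < k \<and> j < k \<and> i \<noteq> j \<and>
      u \<in> vclass k m i \<and> v \<in> vclass k m j}"

definition pairsOf :: "'a set \<Rightarrow> 'a set set" where
  "pairsOf S = {e. e \<subseteq> S \<and> card e = 2}"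

definition transversal :: "nat \<Rightarrow> nat \<Rightarrow> (nat \<times> nat) set \<Rightarrow> bool" where
  "transversal k m S \<longleftrightarrow> S \<subseteq> verts k m \<and> (\<forall>i<k. card (S \<inter> vclass k m i) = 1)"

definition cliqueFam :: "nat \<Rightarrow> nat \<Rightarrow> (nat \<times> nat) set set set" where
  "cliqueFam k m = pairsOf ` {S. transversal k m S}"

definition clusters4 :: "nat \<Rightarrow> nat \<Rightarrow> (nat \<times> nat) set set set" where
  "clusters4 k m = {E1 \<union> E2 \<union> E3 \<union> E4 | E1 E2 E3 E4.
      E1 \<in> cliqueFam k m \<and> E2 \<in> cliqueFam k m \<and> E3 \<in> cliqueFam k m \<and> E4 \<in> cliqueFam k m \<and>
      card {E1, E2, E3, E4} = 4 \<and>
      card (E1 \<inter> E2 \<inter> E3 \<inter> E4 \<inter> crossEdges k m) \<ge> 2}"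

definition Tw :: "'a set set \<Rightarrow> real" where
  "Tw H = (\<Sum>A\<in>H. (1/2) ^ card A)"

definition fnk :: "nat \<Rightarrow> nat \<Rightarrow> real" where
  "fnk n k = real (k choose 3) * (real n / real k) powr (4 * real k - 9)
             * 2 powr (9 - 4 * real (k choose 2))"

end

theory Submission
  imports Defs "HOL-Library.FuncSet" "HOL-Library.Ramsey"
begin

text \<open>A transversal clique is given by a choice function \<open>g\<close> picking vertex \<open>(i, g i)\<close> of
  class \<open>i\<close>. Two common edges of four transversal cliques span three common vertices, so every
  4-cluster arises from a 3-set \<open>T\<close> of classes, a transversal \<open>g1\<close>, and \<open>g2, g3, g4\<close> agreeing
  with \<open>g1\<close> on \<open>T\<close>. Adding the cliques one at a time and counting only the edges not spanned by
  the earlier ones gives \<open>T(F) \<le> binom(k,3) m^k 2^(-binom(k,2)) B^3\<close> with \<open>m = n/k\<close>, where \<open>B\<close> bounds the weight of the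
  transversals agreeing with \<open>g1\<close> on \<open>T\<close>. Grouping those by the \<open>u\<close> further classes on which they
  meet the at most three earlier cliques,
  \<open>B \<le> \<Sum>u binom(k-3,u) 3^u m^(k-3-u) 2^(binom(u+3,2) - binom(k,2))\<close>; for \<open>m = 2^((k+9)/2)\<close>
  every term is at most the \<open>u = 0\<close> term, so \<open>B \<le> (k-2) m^(k-3) 2^(3 - binom(k,2))\<close> and the bound
  becomes \<open>(k-2)^3 f(n,k) < k^3 f(n,k)\<close>.\<close>

lemma sum_Pow_card:
  fixes f :: "nat \<Rightarrow> 'b::comm_semiring_1"
  assumes "finite X"
  shows "(\<Sum>P\<in>Pow X. f (card P)) = (\<Sum>u\<le>card X. of_nat (card X choose u) * f u)"
proof -
  have "(\<Sum>P\<in>Pow X. f (card P)) = (\<Sum>u\<le>card X. \<Sum>P\<in>{P \<in> Pow X. card P = u}. f (card P))"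
    by (rule sum.group[symmetric]) (use assms in \<open>auto intro: card_mono\<close>)
  also have "\<dots> = (\<Sum>u\<le>card X. of_nat (card X choose u) * f u)"
    using n_subsets[OF assms] by (intro sum.cong) (auto simp: Pow_def)
  finally show ?thesis .
qed

lemma pairsOf_eq_nsets: "pairsOf A = [A]\<^bsup>2\<^esup>"
  unfolding pairsOf_def nsets_def by (auto intro: card_ge_0_finite)

lemma finite_pairsOf: "finite A \<Longrightarrow> finite (pairsOf A)"
  by (simp add: pairsOf_eq_nsets finite_imp_finite_nsets)

lemma card_pairsOf: "card (pairsOf A) = card A choose 2"
  by (simp add: pairsOf_eq_nsets)

lemma pairsOf_subset: "e \<in> pairsOf A \<Longrightarrow> e \<subseteq> A"
  unfolding pairsOf_def by blast

lemma pairsOf_Int: "pairsOf A \<inter> pairsOf B = pairsOf (A \<inter> B)"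
  unfolding pairsOf_def by auto

lemma card_Un_pairsOf_ge:
  assumes "finite W" "finite S" "\<forall>e\<in>W. e \<subseteq> V"
  shows "card W + ((card S choose 2) - (card (S \<inter> V) choose 2)) \<le> card (W \<union> pairsOf S)"
proof -
  have sub: "pairsOf (S \<inter> V) \<subseteq> pairsOf S" unfolding pairsOf_def by auto
  have fin: "finite (pairsOf S)" using assms(2) by (rule finite_pairsOf)
  have disj: "W \<inter> (pairsOf S - pairsOf (S \<inter> V)) = {}"
    using assms(3) unfolding pairsOf_def by auto
  have "card W + ((card S choose 2) - (card (S \<inter> V) choose 2))
      = card W + card (pairsOf S - pairsOf (S \<inter> V))"
    using card_Diff_subset[OF finite_subset[OF sub fin] sub] by (simp add: card_pairsOf)
  also have "\<dots> = card (W \<union> (pairsOf S - pairsOf (S \<inter> V)))"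
    using assms(1) fin disj by (simp add: card_Un_disjoint)
  also have "\<dots> \<le> card (W \<union> pairsOf S)"
    using assms(1) fin by (intro card_mono) auto
  finally show ?thesis .
qed

definition transv :: "nat \<Rightarrow> (nat \<Rightarrow> nat) \<Rightarrow> (nat \<times> nat) set" where
  "transv k g = (\<lambda>i. (i, g i)) ` {..<k}"

definition agreeing :: "nat \<Rightarrow> nat \<Rightarrow> nat set \<Rightarrow> (nat \<Rightarrow> nat) \<Rightarrow> (nat \<Rightarrow> nat) set" where
  "agreeing k m T h = {g \<in> {..<k} \<rightarrow>\<^sub>E {..<m}. \<forall>c\<in>T. g c = h c}"

lemma mem_transv [simp]: "(c, y) \<in> transv k g \<longleftrightarrow> c < k \<and> y = g c"
  unfolding transv_def by auto

lemma finite_transv [simp]: "finite (transv k g)"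
  unfolding transv_def by simp

lemma card_transv [simp]: "card (transv k g) = k"
  unfolding transv_def by (simp add: card_image inj_on_def)

lemma finite_agreeing [simp]: "finite (agreeing k m T h)"
  unfolding agreeing_def by (simp add: finite_PiE)

lemma cliqueFam_imp_transv:
  assumes "E \<in> cliqueFam k m"
  obtains g where "g \<in> {..<k} \<rightarrow>\<^sub>E {..<m}" "E = pairsOf (transv k g)"
proof -
  obtain S where S: "transversal k m S" "E = pairsOf S"
    using assms unfolding cliqueFam_def by auto
  have "\<forall>i<k. \<exists>y. S \<inter> vclass k m i = {y}"
    using S(1) unfolding transversal_def by (auto simp: card_1_singleton_iff)
  then obtain v where v: "\<And>i. i < k \<Longrightarrow> S \<inter> vclass k m i = {v i}" by metis
  define g where "g i = (if i < k then snd (v i) else undefined)" for i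
  have v_eq: "v i = (i, g i) \<and> g i < m" if "i < k" for i
  proof -
    have "v i \<in> {i} \<times> {0..<m}" using v[OF that] unfolding vclass_def by blast
    then show ?thesis using that unfolding g_def by (cases "v i") auto
  qed
  have "g \<in> {..<k} \<rightarrow>\<^sub>E {..<m}"
    using v_eq by (auto simp: g_def PiE_def extensional_def)
  moreover have "S = transv k g"
  proof
    show "transv k g \<subseteq> S"
      unfolding transv_def using v v_eq by force
    show "S \<subseteq> transv k g"
    proof
      fix x assume "x \<in> S"
      then obtain i where "i < k" "x \<in> vclass k m i"
        using S(1) unfolding transversal_def verts_def by auto
      then have "x = v i" using v[of i] \<open>x \<in> S\<close> by auto
      then show "x \<in> transv k g" using v_eq[OF \<open>i < k\<close>] \<open>i < k\<close> by simp
    qed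
  qed
  ultimately show thesis using S(2) that by blast
qed

definition cluster :: "nat \<Rightarrow> (nat \<Rightarrow> nat) \<Rightarrow> (nat \<Rightarrow> nat) \<Rightarrow> (nat \<Rightarrow> nat) \<Rightarrow> (nat \<Rightarrow> nat)
    \<Rightarrow> (nat \<times> nat) set set" where
  "cluster k g1 g2 g3 g4 =
     pairsOf (transv k g1) \<union> pairsOf (transv k g2) \<union> pairsOf (transv k g3) \<union> pairsOf (transv k g4)"

definition cluster_index :: "nat \<Rightarrow> nat \<Rightarrow>
    (nat set \<times> (nat \<Rightarrow> nat) \<times> (nat \<Rightarrow> nat) \<times> (nat \<Rightarrow> nat) \<times> (nat \<Rightarrow> nat)) set" where
  "cluster_index k m = (SIGMA T:[{..<k}]\<^bsup>3\<^esup>. SIGMA g1:{..<k} \<rightarrow>\<^sub>E {..<m}.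
     agreeing k m T g1 \<times> agreeing k m T g1 \<times> agreeing k m T g1)"

lemma three_le_if_two_le_choose_two:
  assumes "2 \<le> n choose 2" shows "3 \<le> n"
proof (rule ccontr)
  assume "\<not> 3 \<le> n"
  then have "n \<in> {0, 1, 2}" by auto
  then show False using assms by (auto simp: choose_two)
qed

lemma clusters4_subset:
  "clusters4 k m \<subseteq> (\<lambda>(T, g1, g2, g3, g4). cluster k g1 g2 g3 g4) ` cluster_index k m"
proof
  fix A assume "A \<in> clusters4 k m"
  then obtain E1 E2 E3 E4 where A: "A = E1 \<union> E2 \<union> E3 \<union> E4"
    "E1 \<in> cliqueFam k m" "E2 \<in> cliqueFam k m" "E3 \<in> cliqueFam k m" "E4 \<in> cliqueFam k m"
    "2 \<le> card (E1 \<inter> E2 \<inter> E3 \<inter> E4 \<inter> crossEdges k m)"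
    unfolding clusters4_def by blast
  obtain g1 where g1: "g1 \<in> {..<k} \<rightarrow>\<^sub>E {..<m}" "E1 = pairsOf (transv k g1)"
    using A(2) by (rule cliqueFam_imp_transv)
  obtain g2 where g2: "g2 \<in> {..<k} \<rightarrow>\<^sub>E {..<m}" "E2 = pairsOf (transv k g2)"
    using A(3) by (rule cliqueFam_imp_transv)
  obtain g3 where g3: "g3 \<in> {..<k} \<rightarrow>\<^sub>E {..<m}" "E3 = pairsOf (transv k g3)"
    using A(4) by (rule cliqueFam_imp_transv)
  obtain g4 where g4: "g4 \<in> {..<k} \<rightarrow>\<^sub>E {..<m}" "E4 = pairsOf (transv k g4)"
    using A(5) by (rule cliqueFam_imp_transv)
  define D where "D = transv k g1 \<inter> transv k g2 \<inter> transv k g3 \<inter> transv k g4"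
  have "finite D" unfolding D_def by simp
  have "E1 \<inter> E2 \<inter> E3 \<inter> E4 = pairsOf D"
    unfolding D_def g1 g2 g3 g4 by (simp add: pairsOf_Int)
  then have "2 \<le> card (pairsOf D)"
    using A(6) card_mono[OF finite_pairsOf[OF \<open>finite D\<close>], of "pairsOf D \<inter> crossEdges k m"]
    by auto
  moreover have "inj_on fst D"
    unfolding D_def by (auto simp: inj_on_def transv_def)
  ultimately have "3 \<le> card (fst ` D)"
    by (simp add: card_pairsOf three_le_if_two_le_choose_two card_image)
  then obtain T where T: "T \<subseteq> fst ` D" "card T = 3"
    by (meson obtain_subset_with_card_n)
  have "T \<in> [{..<k}]\<^bsup>3\<^esup>"
    using T finite_subset[OF T(1)] \<open>finite D\<close> unfolding nsets_def D_def by auto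
  moreover have "g2 c = g1 c \<and> g3 c = g1 c \<and> g4 c = g1 c" if "c \<in> T" for c
    using T(1) that unfolding D_def by force
  ultimately have "(T, g1, g2, g3, g4) \<in> cluster_index k m"
    using g1 g2 g3 g4 unfolding cluster_index_def agreeing_def by auto
  moreover have "A = cluster k g1 g2 g3 g4"
    unfolding cluster_def A(1) g1 g2 g3 g4 by simp
  ultimately show "A \<in> (\<lambda>(T, g1, g2, g3, g4). cluster k g1 g2 g3 g4) ` cluster_index k m"
    by force
qed

definition new_edges_weight :: "nat \<Rightarrow> (nat \<times> nat) set \<Rightarrow> (nat \<Rightarrow> nat) \<Rightarrow> real" where
  "new_edges_weight k V g = (1/2) ^ ((k choose 2) - (card (transv k g \<inter> V) choose 2))"

lemma half_pow_card_Un_pairsOf_le: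
  assumes "finite W" "\<forall>e\<in>W. e \<subseteq> V"
  shows "(1/2::real) ^ card (W \<union> pairsOf (transv k g)) \<le> (1/2) ^ card W * new_edges_weight k V g"
proof -
  have "card W + ((k choose 2) - (card (transv k g \<inter> V) choose 2)) \<le> card (W \<union> pairsOf (transv k g))"
    using card_Un_pairsOf_ge[OF assms(1) finite_transv assms(2)] by simp
  then show ?thesis
    unfolding new_edges_weight_def power_add[symmetric] by (intro power_decreasing) auto
qed

lemma half_pow_card_cluster_le:
  "(1/2::real) ^ card (cluster k g1 g2 g3 g4)
     \<le> (1/2) ^ (k choose 2) * new_edges_weight k (transv k g1) g2
       * new_edges_weight k (transv k g1 \<union> transv k g2) g3
       * new_edges_weight k (transv k g1 \<union> transv k g2 \<union> transv k g3) g4"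
proof -
  let ?W1 = "pairsOf (transv k g1)"
  let ?W2 = "?W1 \<union> pairsOf (transv k g2)"
  let ?W3 = "?W2 \<union> pairsOf (transv k g3)"
  have w_nonneg: "0 \<le> new_edges_weight k V g" for V g
    unfolding new_edges_weight_def by simp
  have "(1/2::real) ^ card (cluster k g1 g2 g3 g4) = (1/2) ^ card (?W3 \<union> pairsOf (transv k g4))"
    unfolding cluster_def ..
  also have "\<dots> \<le> (1/2) ^ card ?W3
      * new_edges_weight k (transv k g1 \<union> transv k g2 \<union> transv k g3) g4"
    by (rule half_pow_card_Un_pairsOf_le) (auto simp: finite_pairsOf dest: pairsOf_subset)
  also have "\<dots> \<le> (1/2) ^ card ?W2 * new_edges_weight k (transv k g1 \<union> transv k g2) g3
      * new_edges_weight k (transv k g1 \<union> transv k g2 \<union> transv k g3) g4"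
    by (intro mult_right_mono w_nonneg half_pow_card_Un_pairsOf_le)
      (auto simp: finite_pairsOf dest: pairsOf_subset)
  also have "\<dots> \<le> (1/2) ^ card ?W1 * new_edges_weight k (transv k g1) g2
      * new_edges_weight k (transv k g1 \<union> transv k g2) g3
      * new_edges_weight k (transv k g1 \<union> transv k g2 \<union> transv k g3) g4"
    by (intro mult_right_mono w_nonneg half_pow_card_Un_pairsOf_le)
      (auto simp: finite_pairsOf dest: pairsOf_subset)
  finally show ?thesis by (simp add: card_pairsOf)
qed

definition hits :: "nat \<Rightarrow> (nat \<times> nat) set \<Rightarrow> (nat \<Rightarrow> nat) \<Rightarrow> nat set" where
  "hits k V g = {c \<in> {..<k}. (c, g c) \<in> V}"

lemma card_transv_Int: "card (transv k g \<inter> V) = card (hits k V g)"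
proof -
  have "transv k g \<inter> V = (\<lambda>c. (c, g c)) ` hits k V g"
    unfolding hits_def transv_def by auto
  then show ?thesis by (simp add: card_image inj_on_def)
qed

lemma card_agreeing_hits_le:
  assumes V: "finite V" "\<And>c. card {y. (c, y) \<in> V} \<le> r"
    and T: "T \<subseteq> {..<k}" and P: "P \<subseteq> {..<k} - T"
  shows "card {g \<in> agreeing k m T h. hits k V g - T = P} \<le> r ^ card P * m ^ (k - card T - card P)"
proof -
  define F where "F c = (if c \<in> T then {h c} else if c \<in> P then {y. (c, y) \<in> V} else {..<m})" for c
  have fin_F: "finite (F c)" for c
    using finite_vimageI[OF V(1), of "Pair c"] unfolding F_def vimage_def by (auto simp: inj_on_def)
  have "{g \<in> agreeing k m T h. hits k V g - T = P} \<subseteq> PiE {..<k} F"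
    unfolding agreeing_def hits_def F_def by (auto simp: PiE_iff extensional_def)
  then have "card {g \<in> agreeing k m T h. hits k V g - T = P} \<le> card (PiE {..<k} F)"
    by (rule card_mono[rotated]) (simp add: finite_PiE fin_F)
  also have "\<dots> = (\<Prod>c<k. card (F c))"
    by (rule card_PiE) simp
  also have "\<dots> \<le> (\<Prod>c<k. if c \<in> T then 1 else if c \<in> P then r else m)"
    using V(2) by (intro prod_mono) (auto simp: F_def)
  also have "\<dots> = (\<Prod>c\<in>P. r) * (\<Prod>c\<in>{..<k} - T - P. m)"
  proof -
    have "{..<k} \<inter> - T \<inter> {c. c \<in> P} = P" "{..<k} \<inter> - T \<inter> - {c. c \<in> P} = {..<k} - T - P"
      using P by auto
    then show ?thesis by (simp add: prod.If_cases)
  qed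
  also have "\<dots> = r ^ card P * m ^ (k - card T - card P)"
  proof -
    have "card ({..<k} - T) = k - card T"
      using T finite_subset[OF T] by (simp add: card_Diff_subset)
    then have "card ({..<k} - T - P) = k - card T - card P"
      using P finite_subset[OF P] by (simp add: card_Diff_subset)
    then show ?thesis by simp
  qed
  finally show ?thesis .
qed

lemma sum_new_edges_weight_le:
  assumes V: "finite V" "\<And>c. card {y. (c, y) \<in> V} \<le> r"
    and T: "T \<subseteq> {..<k}" and hT: "\<forall>c\<in>T. (c, h c) \<in> V"
  shows "(\<Sum>g\<in>agreeing k m T h. new_edges_weight k V g)
    \<le> (\<Sum>u\<le>k - card T. real ((k - card T) choose u)
          * (r ^ u * real m ^ (k - card T - u) * (1/2) ^ ((k choose 2) - ((card T + u) choose 2))))"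
proof -
  define X where "X = {..<k} - T"
  define \<psi> where "\<psi> u = (1/2::real) ^ ((k choose 2) - ((card T + u) choose 2))" for u
  have "finite T" using T finite_subset by blast
  have card_X: "card X = k - card T"
    unfolding X_def using T \<open>finite T\<close> by (simp add: card_Diff_subset)
  have weight: "new_edges_weight k V g = \<psi> (card (hits k V g - T))" if "g \<in> agreeing k m T h" for g
  proof -
    have "T \<subseteq> hits k V g"
      using that hT T unfolding hits_def agreeing_def by auto
    then have "card (hits k V g) = card T + card (hits k V g - T)"
      using card_Diff_subset[OF \<open>finite T\<close>] card_mono[of "hits k V g" T]
      by (simp add: hits_def)
    then show ?thesis
      unfolding new_edges_weight_def \<psi>_def card_transv_Int by simp
  qed
  have "(\<Sum>g\<in>agreeing k m T h. new_edges_weight k V g)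
      = (\<Sum>g\<in>agreeing k m T h. \<psi> (card (hits k V g - T)))"
    using weight by (rule sum.cong[OF refl])
  also have "\<dots> = (\<Sum>P\<in>Pow X. \<Sum>g\<in>{g \<in> agreeing k m T h. hits k V g - T = P}. \<psi> (card P))"
    by (subst sum.group[symmetric, of _ "Pow X" "\<lambda>g. hits k V g - T"])
      (auto simp: X_def hits_def intro!: sum.cong)
  also have "\<dots> = (\<Sum>P\<in>Pow X. real (card {g \<in> agreeing k m T h. hits k V g - T = P}) * \<psi> (card P))"
    by simp
  also have "\<dots> \<le> (\<Sum>P\<in>Pow X. real (r ^ card P * m ^ (k - card T - card P)) * \<psi> (card P))"
    by (intro sum_mono mult_right_mono of_nat_mono card_agreeing_hits_le[OF V T])
      (auto simp: X_def \<psi>_def)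
  also have "\<dots> = (\<Sum>u\<le>k - card T. real ((k - card T) choose u)
          * (r ^ u * real m ^ (k - card T - u) * \<psi> u))"
    using sum_Pow_card[of X "\<lambda>u. real (r ^ u * m ^ (k - card T - u)) * \<psi> u"] card_X
    by (simp add: X_def)
  finally show ?thesis by (simp add: \<psi>_def)
qed

lemma card_class_le_3:
  assumes "V \<subseteq> transv k a \<union> transv k b \<union> transv k d"
  shows "card {y. (c, y) \<in> V} \<le> 3"
proof -
  have "{y. (c, y) \<in> V} \<subseteq> {a c, b c, d c}"
    using assms by auto
  then have "card {y. (c, y) \<in> V} \<le> card {a c, b c, d c}"
    by (rule card_mono[rotated]) simp
  also have "\<dots> \<le> 3"
    by (simp add: card_insert_if)
  finally show ?thesis .
qed

lemma two_mult_choose_two: "2 * (n choose 2) = n * (n - 1)"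
proof -
  have "even (n * (n - 1))"
    by (cases "even n") auto
  then show ?thesis
    by (simp add: choose_two)
qed

lemma three_le_choose_two: "3 \<le> k \<Longrightarrow> 3 \<le> k choose 2"
  using binomial_right_mono[of 3 k 2] by (simp add: choose_two)

lemma sq_le_two_pow: "4 \<le> x \<Longrightarrow> x ^ 2 \<le> (2::nat) ^ x"
proof (induction x rule: dec_induct)
  case base
  then show ?case by simp
next
  case (step x)
  have "Suc x ^ 2 = x ^ 2 + (2 * x + 1)"
    by (simp add: power2_eq_square)
  also have "\<dots> \<le> x ^ 2 + x ^ 2"
    using mult_le_mono1[OF step(1), of x] step(1) unfolding power2_eq_square by linarith
  also have "\<dots> \<le> 2 ^ Suc x"
    using step(3) by simp
  finally show ?case .
qed

text \<open>The integer, squared form of \<open>binom(k-3,u) 3^u 2^(binom(u+3,2) - 3) \<le> m^u\<close> for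
  \<open>m = 2^((k+9)/2)\<close>.\<close>

lemma choose_pow_sq_le:
  assumes k: "7 \<le> k" and u: "u \<le> k - 3"
  shows "(((k - 3) choose u) * 3 ^ u * 2 ^ ((3 + u) choose 2)) ^ 2 \<le> 64 * (2::nat) ^ (u * (k + 9))"
proof -
  consider "u = 0" | "u = 1" | "2 \<le> u" by linarith
  then show ?thesis
  proof cases
    case 1
    then show ?thesis by (simp add: choose_two)
  next
    case 2
    then have "(((k - 3) choose u) * 3 ^ u * 2 ^ ((3 + u) choose 2)) ^ 2 = 9 * 2 ^ 12 * (k - 3) ^ 2"
      by (simp add: choose_two power2_eq_square)
    also have "\<dots> \<le> 9 * 2 ^ 12 * 2 ^ (k - 3)"
      using sq_le_two_pow[of "k - 3"] k by simp
    also have "\<dots> \<le> 64 * 2 ^ (u * (k + 9))"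
    proof -
      have "k + 9 = (k - 3) + 12"
        using k by simp
      then have "(2::nat) ^ (k + 9) = 2 ^ (k - 3) * 2 ^ 12"
        by (metis power_add)
      then show ?thesis using 2 by simp
    qed
    finally show ?thesis .
  next
    case 3
    then obtain v where v: "u = v + 2" by (metis add.commute le_Suc_ex)
    define N where "N = (k - 3) + 2 * u + ((3 + u) choose 2)"
    have "((k - 3) choose u) * 3 ^ u * 2 ^ ((3 + u) choose 2) \<le> 2 ^ (k - 3) * 4 ^ u * 2 ^ ((3 + u) choose 2)"
      by (intro mult_mono binomial_le_pow2 power_mono) simp_all
    also have "\<dots> = 2 ^ N"
      by (simp add: N_def power_add power_mult)
    finally have "(((k - 3) choose u) * 3 ^ u * 2 ^ ((3 + u) choose 2)) ^ 2 \<le> (2 ^ N) ^ 2"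
      by (rule power_mono) simp
    also have "\<dots> = 2 ^ (2 * N)"
      by (simp flip: power_mult add: mult.commute)
    also have "\<dots> \<le> 2 ^ (6 + u * (k + 9))"
    proof (rule power_increasing)
      have "v * (v + 5) \<le> v * k"
        using k u v by (intro mult_le_mono2) simp
      moreover have "2 * ((3 + u) choose 2) = (5 + v) * (4 + v)"
        using two_mult_choose_two[of "3 + u"] v by simp
      ultimately show "2 * N \<le> 6 + u * (k + 9)"
        using k unfolding N_def v by (simp add: algebra_simps)
    qed simp
    also have "\<dots> = 64 * 2 ^ (u * (k + 9))"
      by (simp add: power_add)
    finally show ?thesis .
  qed
qed

lemma half_pow_diff: "q \<le> c \<Longrightarrow> (1/2::real) ^ (c - q) = (1/2) ^ c * 2 ^ q"
  by (simp add: power_diff power_one_over)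

lemma choose_term_le:
  fixes m :: real
  assumes k: "7 \<le> k" and u: "u \<le> k - 3" and m: "m ^ 2 = 2 ^ (k + 9)" "0 < m"
  shows "real ((k - 3) choose u) * 3 ^ u * m ^ (k - 3 - u) * (1/2) ^ ((k choose 2) - ((3 + u) choose 2))
    \<le> m ^ (k - 3) * (1/2) ^ ((k choose 2) - 3)"
proof -
  define c where "c = k choose 2"
  define q where "q = (3 + u) choose 2"
  define x where "x = real ((k - 3) choose u) * 3 ^ u * 2 ^ q"
  have "q \<le> c"
    unfolding q_def c_def using u k by (intro binomial_right_mono) simp
  have "3 \<le> c"
    unfolding c_def using k by (intro three_le_choose_two) simp
  have "x ^ 2 \<le> 64 * 2 ^ (u * (k + 9))"
    using of_nat_mono[OF choose_pow_sq_le[OF k u]] unfolding x_def q_def by simp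
  also have "\<dots> = 64 * (m ^ 2) ^ u"
    unfolding m(1) power_mult[symmetric] by (simp add: mult.commute)
  also have "\<dots> = (8 * m ^ u) ^ 2"
    by (simp add: power_mult_distrib flip: power_mult) (simp add: mult.commute)
  finally have "x \<le> 8 * m ^ u"
    by (rule power2_le_imp_le) (simp add: m(2) less_imp_le)
  then have "x * (m ^ (k - 3 - u) * (1/2) ^ c) \<le> 8 * m ^ u * (m ^ (k - 3 - u) * (1/2) ^ c)"
    using m(2) by (intro mult_right_mono) auto
  moreover have "m ^ u * m ^ (k - 3 - u) = m ^ (k - 3)"
  proof -
    have "u + (k - 3 - u) = k - 3" using u by simp
    then show ?thesis by (metis power_add)
  qed
  ultimately show ?thesis
    unfolding c_def[symmetric] q_def[symmetric] half_pow_diff[OF \<open>q \<le> c\<close>] half_pow_diff[OF \<open>3 \<le> c\<close>]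
    by (simp add: x_def algebra_simps)
qed

definition agreeing_bound :: "nat \<Rightarrow> real \<Rightarrow> real" where
  "agreeing_bound k m = real (k - 2) * m ^ (k - 3) * (1/2) ^ ((k choose 2) - 3)"

lemma sum_new_edges_weight_le_agreeing_bound:
  assumes V: "V \<subseteq> transv k a \<union> transv k b \<union> transv k d"
    and T: "T \<in> [{..<k}]\<^bsup>3\<^esup>" and hT: "\<forall>c\<in>T. (c, h c) \<in> V"
    and k: "7 \<le> k" and m: "real m ^ 2 = 2 ^ (k + 9)"
  shows "(\<Sum>g\<in>agreeing k m T h. new_edges_weight k V g) \<le> agreeing_bound k m"
proof -
  have "finite V"
    using V by (rule finite_subset) simp
  moreover have "card {y. (c, y) \<in> V} \<le> 3" for c
    using V by (rule card_class_le_3)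
  moreover have "T \<subseteq> {..<k}" "card T = 3"
    using T by (auto simp: nsets_def)
  moreover have "0 < m"
    using m by (cases "m = 0") auto
  ultimately have "(\<Sum>g\<in>agreeing k m T h. new_edges_weight k V g)
    \<le> (\<Sum>u\<le>k - 3. real ((k - 3) choose u) * 3 ^ u * real m ^ (k - 3 - u)
                   * (1/2) ^ ((k choose 2) - ((3 + u) choose 2)))"
    using sum_new_edges_weight_le[of V 3 T k h m] hT by (simp add: mult.assoc)
  also have "\<dots> \<le> (\<Sum>u\<le>k - 3. real m ^ (k - 3) * (1/2) ^ ((k choose 2) - 3))"
    using m k \<open>0 < m\<close> by (intro sum_mono choose_term_le) auto
  also have "\<dots> = agreeing_bound k m"
    using k by (simp add: agreeing_bound_def Suc_diff_Suc)
  finally show ?thesis .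
qed

lemma sum_cluster_weights_le:
  fixes g1 :: "nat \<Rightarrow> nat"
  assumes T: "T \<in> [{..<k}]\<^bsup>3\<^esup>" and k: "7 \<le> k" and m: "real m ^ 2 = 2 ^ (k + 9)"
  defines "A \<equiv> agreeing k m T g1"
  shows "(\<Sum>g2\<in>A. \<Sum>g3\<in>A. \<Sum>g4\<in>A. new_edges_weight k (transv k g1) g2
            * new_edges_weight k (transv k g1 \<union> transv k g2) g3
            * new_edges_weight k (transv k g1 \<union> transv k g2 \<union> transv k g3) g4)
    \<le> agreeing_bound k m ^ 3"
proof -
  let ?w = "new_edges_weight k" and ?B = "agreeing_bound k m"
  have w_nonneg: "0 \<le> ?w V g" for V g
    unfolding new_edges_weight_def by simp
  have B_nonneg: "0 \<le> ?B"
    unfolding agreeing_bound_def by simp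
  have sum_w_le: "(\<Sum>g\<in>A. ?w V g) \<le> ?B"
    if "V \<subseteq> transv k a \<union> transv k b \<union> transv k d" "transv k g1 \<subseteq> V" for V a b d
    using T that unfolding A_def
    by (intro sum_new_edges_weight_le_agreeing_bound[OF that(1) T _ k m]) (force simp: nsets_def)
  have "(\<Sum>g2\<in>A. \<Sum>g3\<in>A. \<Sum>g4\<in>A. ?w (transv k g1) g2 * ?w (transv k g1 \<union> transv k g2) g3
          * ?w (transv k g1 \<union> transv k g2 \<union> transv k g3) g4)
      = (\<Sum>g2\<in>A. ?w (transv k g1) g2 * (\<Sum>g3\<in>A. ?w (transv k g1 \<union> transv k g2) g3
          * (\<Sum>g4\<in>A. ?w (transv k g1 \<union> transv k g2 \<union> transv k g3) g4)))"
    by (simp add: sum_distrib_left mult.assoc)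
  also have "\<dots> \<le> (\<Sum>g2\<in>A. ?w (transv k g1) g2 * (\<Sum>g3\<in>A. ?w (transv k g1 \<union> transv k g2) g3 * ?B))"
    by (intro sum_mono mult_left_mono sum_w_le w_nonneg) auto
  also have "\<dots> = (\<Sum>g2\<in>A. ?w (transv k g1) g2 * ((\<Sum>g3\<in>A. ?w (transv k g1 \<union> transv k g2) g3) * ?B))"
    by (simp add: sum_distrib_right)
  also have "\<dots> \<le> (\<Sum>g2\<in>A. ?w (transv k g1) g2 * (?B * ?B))"
    by (intro sum_mono mult_left_mono mult_right_mono sum_w_le w_nonneg B_nonneg) auto
  also have "\<dots> = (\<Sum>g2\<in>A. ?w (transv k g1) g2) * (?B * ?B)"
    by (simp add: sum_distrib_right)
  also have "\<dots> \<le> ?B * (?B * ?B)"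
    by (intro mult_right_mono sum_w_le mult_nonneg_nonneg B_nonneg) auto
  finally show ?thesis
    by (simp add: power3_eq_cube)
qed

lemma Tw_bound_eq:
  assumes "3 \<le> k"
  shows "real (k choose 3) * m ^ k * (1/2) ^ (k choose 2) * agreeing_bound k m ^ 3
    = real (k - 2) ^ 3 * (real (k choose 3) * m ^ (4 * k - 9) * (1/2) ^ (4 * (k choose 2) - 9))"
proof -
  have exps: "4 * k - 9 = k + (k - 3) * 3"
    "4 * (k choose 2) - 9 = (k choose 2) + ((k choose 2) - 3) * 3"
    using assms three_le_choose_two[OF assms] by auto
  show ?thesis
    unfolding agreeing_bound_def exps power_add power_mult power_mult_distrib by (simp only: mult_ac)
qed

lemma Tw_clusters4_le:
  assumes k: "7 \<le> k" and m: "real m ^ 2 = 2 ^ (k + 9)"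
  shows "Tw (clusters4 k m)
    \<le> real (k - 2) ^ 3 * (real (k choose 3) * real m ^ (4 * k - 9) * (1/2) ^ (4 * (k choose 2) - 9))"
proof -
  let ?cl = "\<lambda>(T, g1, g2, g3, g4). cluster k g1 g2 g3 g4"
  let ?w = "new_edges_weight k"
  have fin: "finite (cluster_index k m)"
    unfolding cluster_index_def by (intro finite_SigmaI finite_PiE) (auto simp: finite_imp_finite_nsets)
  have "Tw (clusters4 k m) \<le> (\<Sum>A\<in>?cl ` cluster_index k m. (1/2) ^ card A)"
    unfolding Tw_def using clusters4_subset fin by (intro sum_mono2) auto
  also have "\<dots> \<le> (\<Sum>t\<in>cluster_index k m. (1/2) ^ card (?cl t))"
    using sum_image_le[OF fin, of "\<lambda>A. (1/2::real) ^ card A" ?cl] by (simp add: o_def)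
  also have "\<dots> = (\<Sum>T\<in>[{..<k}]\<^bsup>3\<^esup>. \<Sum>g1\<in>{..<k} \<rightarrow>\<^sub>E {..<m}. \<Sum>g2\<in>agreeing k m T g1.
      \<Sum>g3\<in>agreeing k m T g1. \<Sum>g4\<in>agreeing k m T g1. (1/2) ^ card (cluster k g1 g2 g3 g4))"
    unfolding cluster_index_def
    by (simp add: sum.Sigma finite_SigmaI finite_PiE finite_imp_finite_nsets prod.case_distrib)
  also have "\<dots> \<le> (\<Sum>T\<in>[{..<k}]\<^bsup>3\<^esup>. \<Sum>g1\<in>{..<k} \<rightarrow>\<^sub>E {..<m}. (1/2) ^ (k choose 2) * agreeing_bound k m ^ 3)"
  proof (intro sum_mono)
    fix T g1 assume T: "T \<in> [{..<k}]\<^bsup>3\<^esup>"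
    let ?A = "agreeing k m T g1"
    have "(\<Sum>g2\<in>?A. \<Sum>g3\<in>?A. \<Sum>g4\<in>?A. (1/2::real) ^ card (cluster k g1 g2 g3 g4))
        \<le> (1/2) ^ (k choose 2) * (\<Sum>g2\<in>?A. \<Sum>g3\<in>?A. \<Sum>g4\<in>?A. ?w (transv k g1) g2
          * ?w (transv k g1 \<union> transv k g2) g3 * ?w (transv k g1 \<union> transv k g2 \<union> transv k g3) g4)"
      unfolding sum_distrib_left using half_pow_card_cluster_le
      by (intro sum_mono) (simp add: mult.assoc)
    also have "\<dots> \<le> (1/2) ^ (k choose 2) * agreeing_bound k m ^ 3"
      by (rule mult_left_mono[OF sum_cluster_weights_le[OF T k m]]) simp
    finally show "(\<Sum>g2\<in>?A. \<Sum>g3\<in>?A. \<Sum>g4\<in>?A. (1/2::real) ^ card (cluster k g1 g2 g3 g4))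
        \<le> (1/2) ^ (k choose 2) * agreeing_bound k m ^ 3" .
  qed
  also have "\<dots> = real (k choose 3) * real m ^ k * (1/2) ^ (k choose 2) * agreeing_bound k m ^ 3"
    by (simp add: card_PiE)
  also have "\<dots> = real (k - 2) ^ 3 * (real (k choose 3) * real m ^ (4 * k - 9) * (1/2) ^ (4 * (k choose 2) - 9))"
    using k by (intro Tw_bound_eq) simp
  finally show ?thesis .
qed

lemma two_powr_minus_of_nat: "(2::real) powr (- real N) = (1/2) ^ N"
proof -
  have "(2::real) powr real N = 2 ^ N"
    by (rule powr_realpow) simp
  then show ?thesis
    by (simp only: powr_minus_divide power_one_over)
qed

lemma fnk_eq_pow:
  assumes k: "3 \<le> k" and x: "0 < x" and n: "real n = real k * x"
  shows "fnk n k = real (k choose 3) * x ^ (4 * k - 9) * (1/2) ^ (4 * (k choose 2) - 9)"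
proof -
  have "real n / real k = x"
    using n k by simp
  moreover have "x powr (4 * real k - 9) = x ^ (4 * k - 9)"
    using k x by (simp add: of_nat_diff flip: powr_realpow)
  moreover have "9 - 4 * real (k choose 2) = - real (4 * (k choose 2) - 9)"
    using three_le_choose_two[OF k] by (simp add: of_nat_diff)
  ultimately show ?thesis
    unfolding fnk_def by (simp only: two_powr_minus_of_nat)
qed

theorem mainTheorem4:
  shows "\<exists>K. \<forall>k n. k \<ge> K \<longrightarrow> real n = real k * 2 powr ((real k + 9) / 2) \<longrightarrow> k dvd n \<longrightarrow>
           Tw (clusters4 k (n div k)) < real k ^ 3 * fnk n k"
proof (intro exI[of _ 7] allI impI)
  fix k n :: nat
  assume k: "7 \<le> k" and n: "real n = real k * 2 powr ((real k + 9) / 2)" and "k dvd n"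
  define m where "m = n div k"
  define F where "F = real (k choose 3) * real m ^ (4 * k - 9) * (1/2) ^ (4 * (k choose 2) - 9)"
  have m_eq: "real m = 2 powr ((real k + 9) / 2)"
    using n k \<open>k dvd n\<close> unfolding m_def by (simp add: real_of_nat_div)
  have "real m ^ 2 = 2 powr ((real k + 9) / 2) * 2 powr ((real k + 9) / 2)"
    unfolding m_eq by (rule power2_eq_square)
  also have "\<dots> = 2 powr real (k + 9)"
    by (simp flip: powr_add)
  also have "\<dots> = 2 ^ (k + 9)"
    by (rule powr_realpow) simp
  finally have "Tw (clusters4 k m) \<le> real (k - 2) ^ 3 * F"
    unfolding F_def by (rule Tw_clusters4_le[OF k])
  also have "\<dots> < real k ^ 3 * F"
    using k m_eq unfolding F_def by (intro mult_strict_right_mono power_strict_mono) auto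
  also have "\<dots> = real k ^ 3 * fnk n k"
    using fnk_eq_pow[of k "real m" n] k n m_eq unfolding F_def by simp
  finally show "Tw (clusters4 k (n div k)) < real k ^ 3 * fnk n k"
    unfolding m_def .
qed

end
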